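(* Let $(X_n)_{n\ge0}$ be simple random walk on a finite rooted tree $T$ with a self-loop at the root, started at $v_0$, with stationary distribution $\pi$, and let $\eta$ be an optimal strong stationary time for it. Let $\tau$ be a random time independent of $(X,\eta)$ with $0<\tau<\infty$ almost surely, and assume $P_{v_0}(\eta<\tau)>0$. Then for every vertex $v$, \[ P_{v_0}\big(X_{\tau-1}=v\,\big|\,\eta<\tau\big)=\pi(v). \]
   Context: Degrees count the self-loop twice; simple random walk moves from $v$ along a uniformly chosen edge-end at $v$, so $\pi(v)=\deg(v)/\sum_z\deg(z)$. A strong stationary time for the walk started at $v_0$ is a stopping time $\eta$ (possibly with respect to a filtration enlarged by independent extra randomness) with $P_{v_0}(X_\eta=y,\eta=k)=\pi(y)P_{v_0}(\eta=k)$ for all $y,k$; it is optimal if $P_{v_0}(\eta>t)=\max_y[1-P^t(v_0,y)/\pi(y)]$ for all $t$. *)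

theory Defs
  imports "HOL-Probability.Probability"
begin

definition is_tree :: "'v set \<Rightarrow> ('v \<Rightarrow> 'v \<Rightarrow> bool) \<Rightarrow> bool" where
  "is_tree V E \<longleftrightarrow> finite V \<and> V \<noteq> {}
     \<and> (\<forall>u w. E u w \<longrightarrow> u \<in> V \<and> w \<in> V)
     \<and> (\<forall>u w. E u w \<longrightarrow> E w u)
     \<and> (\<forall>u. \<not> E u u)
     \<and> (\<forall>u\<in>V. \<forall>w\<in>V. E\<^sup>*\<^sup>* u w)
     \<and> card {{u, w} | u w. E u w} = card V - 1"

definition nbrs :: "'v set \<Rightarrow> ('v \<Rightarrow> 'v \<Rightarrow> bool) \<Rightarrow> 'v \<Rightarrow> 'v set" where
  "nbrs V E v = {w \<in> V. E v w}"

text \<open>Degree in the tree with an added self-loop at the root r (the loop counts twice).\<close>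
definition deg :: "'v set \<Rightarrow> ('v \<Rightarrow> 'v \<Rightarrow> bool) \<Rightarrow> 'v \<Rightarrow> 'v \<Rightarrow> nat" where
  "deg V E r v = (if v \<in> V then card (nbrs V E v) + (if v = r then 2 else 0) else 0)"

definition srw :: "'v set \<Rightarrow> ('v \<Rightarrow> 'v \<Rightarrow> bool) \<Rightarrow> 'v \<Rightarrow> 'v \<Rightarrow> 'v \<Rightarrow> real" where
  "srw V E r v w = (if v \<in> V \<and> w \<in> V then
      ((if E v w then 1 else 0) + (if v = r \<and> w = r then 2 else 0)) / real (deg V E r v)
    else 0)"

fun srw_pow :: "'v set \<Rightarrow> ('v \<Rightarrow> 'v \<Rightarrow> bool) \<Rightarrow> 'v \<Rightarrow> nat \<Rightarrow> 'v \<Rightarrow> 'v \<Rightarrow> real" where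
  "srw_pow V E r 0 x y = (if x = y then 1 else 0)"
| "srw_pow V E r (Suc t) x y = (\<Sum>z\<in>V. srw_pow V E r t x z * srw V E r z y)"

definition stat_pi :: "'v set \<Rightarrow> ('v \<Rightarrow> 'v \<Rightarrow> bool) \<Rightarrow> 'v \<Rightarrow> 'v \<Rightarrow> real" where
  "stat_pi V E r v = real (deg V E r v) / real (\<Sum>z\<in>V. deg V E r z)"

end

theory Submission
  imports Defs
begin

text \<open>Because \<eta> is a stopping time for the walk enlarged by randomness U independent of it,
the walk restarts as a Markov chain at time \<eta>. Strong stationarity makes its position at
time \<eta> = k distributed as \<pi>, and \<pi> is invariant, so P(X s = v, \<eta> = k) = \<pi>(v) P(\<eta> = k) for
every s \<ge> k. Summing over k < t gives P(X (t - 1) = v, \<eta> < t) = \<pi>(v) P(\<eta> < t), and averaging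
over the law of the independent time \<tau> yields the claim.\<close>

section \<open>Simple random walk on a tree with a loop at the root\<close>

lemma deg_gt_0:
  assumes tree: "is_tree V E" and r: "r \<in> V" and y: "y \<in> V"
  shows "deg V E r y > 0"
proof (cases "y = r")
  case True
  then show ?thesis using y by (simp add: deg_def)
next
  case False
  have "E\<^sup>*\<^sup>* y r" using tree r y by (simp add: is_tree_def)
  then obtain w where "E y w" using False by (metis converse_rtranclpE)
  then have "w \<in> nbrs V E y" using tree by (simp add: is_tree_def nbrs_def)
  moreover have "finite (nbrs V E y)" using tree by (simp add: is_tree_def nbrs_def)
  ultimately have "card (nbrs V E y) > 0" using card_gt_0_iff by blast
  then show ?thesis using y by (simp add: deg_def)
qed

lemma sum_edge_ends_eq_deg:
  assumes "finite V" and "r \<in> V" and "v \<in> V"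
  shows "(\<Sum>z\<in>V. (if E v z then 1 else 0) + (if v = r \<and> z = r then 2 else 0 :: real))
    = real (deg V E r v)"
proof -
  have "(\<Sum>z\<in>V. if E v z then 1 else 0 :: real) = real (card (nbrs V E v))"
    using assms(1) by (simp add: nbrs_def sum.If_cases Int_def)
  moreover have "(\<Sum>z\<in>V. if v = r \<and> z = r then 2 else 0 :: real) = (if v = r then 2 else 0)"
    using assms by (cases "v = r") simp_all
  ultimately show ?thesis
    using assms(3) by (simp add: sum.distrib deg_def)
qed

lemma sum_srw_eq_1:
  assumes tree: "is_tree V E" and r: "r \<in> V" and y: "y \<in> V"
  shows "(\<Sum>z\<in>V. srw V E r y z) = 1"
proof -
  have "(\<Sum>z\<in>V. srw V E r y z)
      = (\<Sum>z\<in>V. (if E y z then 1 else 0) + (if y = r \<and> z = r then 2 else 0)) / real (deg V E r y)"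
    using y by (simp add: srw_def sum_divide_distrib)
  also have "\<dots> = 1"
    using tree r y deg_gt_0[OF tree r y] by (simp add: sum_edge_ends_eq_deg is_tree_def)
  finally show ?thesis .
qed

lemma srw_stat_pi:
  assumes tree: "is_tree V E" and r: "r \<in> V" and v: "v \<in> V"
  shows "(\<Sum>y\<in>V. stat_pi V E r y * srw V E r y v) = stat_pi V E r v"
proof -
  have sym: "E a b = E b a" for a b using tree unfolding is_tree_def by blast
  define D where "D = real (\<Sum>z\<in>V. deg V E r z)"
  have "stat_pi V E r y * srw V E r y v
      = ((if E v y then 1 else 0) + (if v = r \<and> y = r then 2 else 0)) / D" if "y \<in> V" for y
    using that v deg_gt_0[OF tree r that] by (auto simp: stat_pi_def srw_def D_def sym)
  then have "(\<Sum>y\<in>V. stat_pi V E r y * srw V E r y v)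
      = (\<Sum>y\<in>V. (if E v y then 1 else 0) + (if v = r \<and> y = r then 2 else 0)) / D"
    by (simp add: sum_divide_distrib)
  also have "\<dots> = stat_pi V E r v"
    using tree r v by (simp add: sum_edge_ends_eq_deg is_tree_def stat_pi_def D_def)
  finally show ?thesis .
qed

lemma srw_pow_Suc_left:
  assumes "finite V"
  shows "srw_pow V E r (Suc m) x y = (\<Sum>z\<in>V. srw V E r x z * srw_pow V E r m z y)"
proof (induction m arbitrary: y)
  case 0
  have "srw_pow V E r (Suc 0) x y = (\<Sum>z\<in>V. if x = z then srw V E r x y else 0)"
    by (auto intro: sum.cong)
  moreover have "(\<Sum>z\<in>V. srw V E r x z * srw_pow V E r 0 z y) = (\<Sum>z\<in>V. if y = z then srw V E r x y else 0)"
    by (auto intro: sum.cong)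
  ultimately show ?case using assms by (simp add: srw_def)
next
  case (Suc m)
  have "srw_pow V E r (Suc (Suc m)) x y = (\<Sum>w\<in>V. srw_pow V E r (Suc m) x w * srw V E r w y)"
    by (rule srw_pow.simps(2))
  also have "\<dots> = (\<Sum>w\<in>V. (\<Sum>z\<in>V. srw V E r x z * srw_pow V E r m z w) * srw V E r w y)"
    by (simp only: Suc.IH)
  also have "\<dots> = (\<Sum>w\<in>V. \<Sum>z\<in>V. srw V E r x z * (srw_pow V E r m z w * srw V E r w y))"
    by (simp add: sum_distrib_right mult.assoc)
  also have "\<dots> = (\<Sum>z\<in>V. srw V E r x z * (\<Sum>w\<in>V. srw_pow V E r m z w * srw V E r w y))"
    by (subst sum.swap) (simp add: sum_distrib_left)
  also have "\<dots> = (\<Sum>z\<in>V. srw V E r x z * srw_pow V E r (Suc m) z y)"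
    by simp
  finally show ?case .
qed

lemma srw_pow_stat_pi:
  assumes tree: "is_tree V E" and r: "r \<in> V" and v: "v \<in> V"
  shows "(\<Sum>y\<in>V. stat_pi V E r y * srw_pow V E r m y v) = stat_pi V E r v"
  using v
proof (induction m arbitrary: v)
  case 0
  then show ?case using tree by (simp add: is_tree_def if_distrib sum.If_cases)
next
  case (Suc m)
  have "(\<Sum>y\<in>V. stat_pi V E r y * srw_pow V E r (Suc m) y v)
      = (\<Sum>y\<in>V. \<Sum>z\<in>V. stat_pi V E r y * srw_pow V E r m y z * srw V E r z v)"
    by (simp add: sum_distrib_left mult.assoc)
  also have "\<dots> = (\<Sum>z\<in>V. (\<Sum>y\<in>V. stat_pi V E r y * srw_pow V E r m y z) * srw V E r z v)"
    by (subst sum.swap) (simp add: sum_distrib_right)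
  also have "\<dots> = stat_pi V E r v"
    using Suc.IH srw_stat_pi[OF tree r Suc.prems] by simp
  finally show ?case .
qed

section \<open>Averaging over an independent random time\<close>

lemma pred_in_vimage_family:
  assumes "Measurable.pred K P" and "\<And>\<omega>. \<omega> \<in> space M \<Longrightarrow> f \<omega> \<in> space K"
  shows "{\<omega> \<in> space M. P (f \<omega>)} \<in> {f -` B \<inter> space M | B. B \<in> sets K}"
proof -
  have "{\<omega> \<in> space M. P (f \<omega>)} = f -` {x \<in> space K. P x} \<inter> space M"
    using assms(2) by auto
  moreover have "{x \<in> space K. P x} \<in> sets K"
    using assms(1) by measurable
  ultimately show ?thesis by blast
qed

lemma (in prob_space) prob_at_independent_time_sums:
  fixes \<tau> :: "'a \<Rightarrow> enat"
  assumes \<tau>_fin: "AE \<omega> in M. \<tau> \<omega> < \<infinity>"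
    and indep: "indep_set {\<tau> -` A \<inter> space M | A. A \<in> sets (count_space UNIV)} F"
    and A: "\<And>t. A t \<in> F"
    and S: "S \<in> events"
    and S_at: "\<And>\<omega> t. \<omega> \<in> space M \<Longrightarrow> \<tau> \<omega> = enat t \<Longrightarrow> \<omega> \<in> S \<longleftrightarrow> \<omega> \<in> A t"
  shows "(\<lambda>t. prob (\<tau> -` {enat t} \<inter> space M) * prob (A t)) sums prob S"
proof -
  define T where "T t = \<tau> -` {enat t} \<inter> space M" for t
  have T_in: "T t \<in> {\<tau> -` A \<inter> space M | A. A \<in> sets (count_space UNIV)}" for t
    unfolding T_def by (intro CollectI exI[of _ "{enat t}"]) simp
  have events: "T t \<in> events" "A t \<in> events" for t
    by (rule subsetD[OF indep_setD_ev1[OF indep] T_in], rule subsetD[OF indep_setD_ev2[OF indep] A])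
  have "(\<lambda>t. prob (T t \<inter> A t)) sums prob (\<Union>t. T t \<inter> A t)"
    using events by (intro finite_measure_UNION) (auto simp: disjoint_family_on_def T_def)
  moreover have "prob (\<Union>t. T t \<inter> A t) = prob S"
  proof (rule finite_measure_eq_AE)
    show "AE \<omega> in M. \<omega> \<in> (\<Union>t. T t \<inter> A t) \<longleftrightarrow> \<omega> \<in> S"
      using \<tau>_fin
    proof (rule AE_mp, intro AE_I2 impI)
      fix \<omega> assume \<omega>: "\<omega> \<in> space M" "\<tau> \<omega> < \<infinity>"
      then obtain t where t: "\<tau> \<omega> = enat t" by (cases "\<tau> \<omega>") auto
      then have "\<omega> \<in> (\<Union>t. T t \<inter> A t) \<longleftrightarrow> \<omega> \<in> A t"
        using \<omega> by (auto simp: T_def)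
      also have "\<dots> \<longleftrightarrow> \<omega> \<in> S"
        using S_at[OF \<omega>(1) t] by simp
      finally show "\<omega> \<in> (\<Union>t. T t \<inter> A t) \<longleftrightarrow> \<omega> \<in> S" .
    qed
    show "(\<Union>t. T t \<inter> A t) \<in> events"
      using events by blast
  qed (rule S)
  ultimately show ?thesis
    using indep_setD[OF indep T_in A] by (simp add: T_def)
qed

section \<open>Path events and the Markov property\<close>

lemma (in finite_measure) null_sets_of_measure_0:
  assumes "measure M A = 0" and "A \<in> sets M"
  shows "A \<in> null_sets M"
  using assms by (simp add: null_sets_def emeasure_eq_measure)

locale tree_walk = prob_space M for M :: "'w measure" +
  fixes V :: "'v set" and E :: "'v \<Rightarrow> 'v \<Rightarrow> bool" and r v0 :: 'v and X :: "nat \<Rightarrow> 'w \<Rightarrow> 'v"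
  assumes tree: "is_tree V E" and root: "r \<in> V" and start: "v0 \<in> V"
    and X_meas[measurable]: "\<And>n. X n \<in> measurable M (count_space UNIV)"
    and X_law: "\<And>n xs. length xs = Suc n \<Longrightarrow>
        measure M {\<omega> \<in> space M. \<forall>i\<le>n. X i \<omega> = xs ! i}
        = (if xs ! 0 = v0 then (\<Prod>i<n. srw V E r (xs ! i) (xs ! Suc i)) else 0)"
begin

lemma finite_V: "finite V"
  using tree by (simp add: is_tree_def)

definition path_event :: "'v list \<Rightarrow> 'w set" where
  "path_event xs = {\<omega> \<in> space M. \<forall>i<length xs. X i \<omega> = xs ! i}"

definition escape :: "nat \<Rightarrow> 'w set" where
  "escape n = {\<omega> \<in> space M. X n \<omega> \<notin> V}"

definition paths :: "nat \<Rightarrow> 'v list set" where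
  "paths n = {xs. set xs \<subseteq> V \<and> length xs = Suc n}"

lemma path_event_sets[measurable]: "path_event xs \<in> events"
  unfolding path_event_def by measurable

lemma escape_sets[measurable]: "escape n \<in> events"
proof -
  have "escape n = X n -` (- V) \<inter> space M" by (auto simp: escape_def)
  then show ?thesis using measurable_sets[OF X_meas] by simp
qed

lemma finite_paths: "finite (paths n)"
  unfolding paths_def using finite_V by (rule finite_lists_length_eq)

lemma obtain_path:
  assumes "\<omega> \<in> space M" and "\<forall>i\<le>n. X i \<omega> \<in> V"
  obtains xs where "xs \<in> paths n" and "\<omega> \<in> path_event xs"
proof
  show "map (\<lambda>i. X i \<omega>) [0..<Suc n] \<in> paths n" "\<omega> \<in> path_event (map (\<lambda>i. X i \<omega>) [0..<Suc n])"
    using assms by (auto simp: paths_def path_event_def simp del: upt_Suc)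
qed

lemma paths_last:
  assumes "xs \<in> paths n"
  shows "xs \<noteq> []" and "last xs \<in> V"
proof -
  have "set xs \<subseteq> V" "length xs = Suc n"
    using assms by (simp_all add: paths_def)
  then show "xs \<noteq> []"
    by auto
  then show "last xs \<in> V"
    using last_in_set \<open>set xs \<subseteq> V\<close> by blast
qed

lemma restrict_path_event:
  assumes "xs \<in> paths n" and "\<omega> \<in> path_event xs"
  shows "restrict (\<lambda>i. X i \<omega>) {..n} = restrict (\<lambda>i. xs ! i) {..n}"
  using assms by (intro restrict_ext) (auto simp: paths_def path_event_def)

lemma prob_path_event:
  assumes "xs \<noteq> []"
  shows "prob (path_event xs)
    = (if xs ! 0 = v0 then (\<Prod>i<length xs - 1. srw V E r (xs ! i) (xs ! Suc i)) else 0)"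
proof -
  have l: "length xs = Suc (length xs - 1)" using assms by simp
  have "path_event xs = {\<omega> \<in> space M. \<forall>i\<le>length xs - 1. X i \<omega> = xs ! i}"
    unfolding path_event_def using l by (metis less_Suc_eq_le)
  then show ?thesis using X_law[OF l] by simp
qed

lemma path_event_snoc: "path_event (xs @ [z]) = {\<omega> \<in> path_event xs. X (length xs) \<omega> = z}"
  unfolding path_event_def by (auto simp: nth_append less_Suc_eq)

lemma prob_path_event_snoc:
  assumes "xs \<noteq> []"
  shows "prob (path_event (xs @ [z])) = prob (path_event xs) * srw V E r (last xs) z"
proof -
  obtain n where l: "length xs = Suc n" using assms by (cases xs) auto
  have "(\<Prod>i<n. srw V E r ((xs @ [z]) ! i) ((xs @ [z]) ! Suc i)) = (\<Prod>i<n. srw V E r (xs ! i) (xs ! Suc i))"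
    by (rule prod.cong) (auto simp: nth_append l)
  then have "(\<Prod>i<Suc n. srw V E r ((xs @ [z]) ! i) ((xs @ [z]) ! Suc i))
      = (\<Prod>i<n. srw V E r (xs ! i) (xs ! Suc i)) * srw V E r (last xs) z"
    using l assms by (simp add: nth_append last_conv_nth)
  then show ?thesis
    using assms l prob_path_event[OF assms] prob_path_event[of "xs @ [z]"] by (simp add: nth_append)
qed

lemma prob_path_event_split:
  assumes A: "A \<in> events"
  shows "prob (path_event xs \<inter> A)
    = prob (path_event xs \<inter> A \<inter> escape (length xs)) + (\<Sum>z\<in>V. prob (path_event (xs @ [z]) \<inter> A))"
proof -
  have "path_event xs \<inter> A
      = (path_event xs \<inter> A \<inter> escape (length xs)) \<union> (\<Union>z\<in>V. path_event (xs @ [z]) \<inter> A)"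
    unfolding path_event_snoc escape_def using path_event_sets[of xs, THEN sets.sets_into_space] by auto
  also have "prob \<dots> = prob (path_event xs \<inter> A \<inter> escape (length xs))
      + prob (\<Union>z\<in>V. path_event (xs @ [z]) \<inter> A)"
  proof (rule finite_measure_Union)
    show "(\<Union>z\<in>V. path_event (xs @ [z]) \<inter> A) \<in> events"
      using A finite_V by (intro sets.finite_UN) auto
    show "path_event xs \<inter> A \<inter> escape (length xs) \<in> events"
      using A by simp
  qed (auto simp: path_event_snoc escape_def)
  also have "prob (\<Union>z\<in>V. path_event (xs @ [z]) \<inter> A) = (\<Sum>z\<in>V. prob (path_event (xs @ [z]) \<inter> A))"
    using A finite_V by (intro finite_measure_finite_Union) (auto simp: disjoint_family_on_def path_event_snoc)
  finally show ?thesis .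
qed

lemma path_event_escape_null:
  assumes "xs \<noteq> []" and "last xs \<in> V"
  shows "path_event xs \<inter> escape (length xs) \<in> null_sets M"
proof (rule null_sets_of_measure_0)
  have "prob (path_event xs) = prob (path_event xs \<inter> escape (length xs))
      + (\<Sum>z\<in>V. prob (path_event (xs @ [z])))"
    using prob_path_event_split[of "space M" xs] by simp
  also have "(\<Sum>z\<in>V. prob (path_event (xs @ [z]))) = prob (path_event xs)"
    using sum_srw_eq_1[OF tree root assms(2)]
    by (simp add: prob_path_event_snoc[OF assms(1)] flip: sum_distrib_left)
  finally show "prob (path_event xs \<inter> escape (length xs)) = 0"
    by simp
qed simp

lemma escape_Suc_subset:
  "escape (Suc m) \<subseteq> (\<Union>i\<le>m. escape i) \<union> (\<Union>xs\<in>paths m. path_event xs \<inter> escape (Suc m))"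
proof
  fix \<omega> assume \<omega>: "\<omega> \<in> escape (Suc m)"
  show "\<omega> \<in> (\<Union>i\<le>m. escape i) \<union> (\<Union>xs\<in>paths m. path_event xs \<inter> escape (Suc m))"
  proof (cases "\<forall>i\<le>m. X i \<omega> \<in> V")
    case True
    have "\<omega> \<in> space M" using \<omega> by (simp add: escape_def)
    then obtain xs where "xs \<in> paths m" "\<omega> \<in> path_event xs" using True by (rule obtain_path)
    then show ?thesis using \<omega> by blast
  next
    case False
    then show ?thesis using \<omega> by (auto simp: escape_def)
  qed
qed

text \<open>X is constrained only through the laws of its finite prefixes and takes values in the whole
type, so that it stays in V is a theorem, not an assumption.\<close>

lemma escape_null: "escape n \<in> null_sets M"
proof (induction n rule: less_induct)
  case (less n)
  show ?case
  proof (cases n)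
    case 0
    have "prob (space M - path_event [v0]) = 0"
      using prob_compl[of "path_event [v0]"] prob_path_event[of "[v0]"] by simp
    then have "space M - path_event [v0] \<in> null_sets M"
      by (rule null_sets_of_measure_0) simp
    moreover have "escape n \<subseteq> space M - path_event [v0]"
      using 0 start by (auto simp: escape_def path_event_def)
    ultimately show ?thesis by (rule null_sets_subset[OF _ escape_sets])
  next
    case (Suc m)
    have "(\<Union>i\<le>m. escape i) \<in> null_sets M"
      using less Suc by (intro null_sets_UN') auto
    moreover have "(\<Union>xs\<in>paths m. path_event xs \<inter> escape n) \<in> null_sets M"
    proof (rule null_sets_UN'[OF countable_finite[OF finite_paths]])
      fix xs assume xs: "xs \<in> paths m"
      then have "length xs = n"
        using Suc by (simp add: paths_def)
      then show "path_event xs \<inter> escape n \<in> null_sets M"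
        using path_event_escape_null[OF paths_last[OF xs]] by simp
    qed
    ultimately show ?thesis
      using escape_Suc_subset[of m] Suc by (intro null_sets_subset[OF _ escape_sets]) auto
  qed
qed

lemma prob_path_event_extend:
  assumes "A \<in> events"
  shows "prob (path_event xs \<inter> A) = (\<Sum>z\<in>V. prob (path_event (xs @ [z]) \<inter> A))"
proof -
  have "path_event xs \<inter> A \<inter> escape (length xs) \<in> null_sets M"
    using assms by (intro null_sets_subset[OF escape_null]) auto
  then show ?thesis
    using prob_path_event_split[OF assms, of xs] by (simp add: measure_eq_0_null_sets)
qed

lemma markov_path_event:
  assumes "xs \<noteq> []"
  shows "prob (path_event xs \<inter> {\<omega> \<in> space M. X (length xs - 1 + m) \<omega> = v})
    = prob (path_event xs) * srw_pow V E r m (last xs) v"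
  using assms
proof (induction m arbitrary: xs)
  case 0
  then have "path_event xs \<inter> {\<omega> \<in> space M. X (length xs - 1) \<omega> = v}
      = (if last xs = v then path_event xs else {})"
    by (auto simp: path_event_def last_conv_nth)
  then show ?case by simp
next
  case (Suc m)
  have idx: "length xs - 1 + Suc m = length xs + m"
    using Suc.prems by simp
  have "prob (path_event xs \<inter> {\<omega> \<in> space M. X (length xs - 1 + Suc m) \<omega> = v})
      = (\<Sum>z\<in>V. prob (path_event (xs @ [z]) \<inter> {\<omega> \<in> space M. X (length xs + m) \<omega> = v}))"
    unfolding idx by (rule prob_path_event_extend) simp
  also have "\<dots> = (\<Sum>z\<in>V. prob (path_event (xs @ [z]) \<inter> {\<omega> \<in> space M. X (length (xs @ [z]) - 1 + m) \<omega> = v}))"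
    by simp
  also have "\<dots> = (\<Sum>z\<in>V. prob (path_event xs) * srw V E r (last xs) z * srw_pow V E r m z v)"
    using Suc.IH[of "xs @ [_]"] prob_path_event_snoc[OF Suc.prems] by simp
  also have "\<dots> = prob (path_event xs) * srw_pow V E r (Suc m) (last xs) v"
    by (simp only: srw_pow_Suc_left[OF finite_V] sum_distrib_left mult.assoc)
  finally show ?case .
qed

lemma disjoint_family_path_event: "disjoint_family_on path_event (paths n)"
  unfolding disjoint_family_on_def
proof (intro ballI impI)
  fix xs ys assume "xs \<in> paths n" "ys \<in> paths n" "xs \<noteq> ys"
  then obtain i where "i < Suc n" "xs ! i \<noteq> ys ! i"
    unfolding paths_def by (metis (mono_tags, lifting) mem_Collect_eq nth_equalityI)
  then show "path_event xs \<inter> path_event ys = {}"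
    using \<open>xs \<in> paths n\<close> \<open>ys \<in> paths n\<close> by (auto simp: path_event_def paths_def)
qed

lemma path_event_X_in_walk_family:
  "path_event xs \<inter> {\<omega> \<in> space M. X j \<omega> = c}
    \<in> {(\<lambda>\<omega> n. X n \<omega>) -` B \<inter> space M | B. B \<in> sets (PiM UNIV (\<lambda>_. count_space UNIV))}"
proof -
  have "path_event xs \<inter> {\<omega> \<in> space M. X j \<omega> = c}
      = {\<omega> \<in> space M. (\<lambda>g. (\<forall>i<length xs. g i = xs ! i) \<and> g j = c) (\<lambda>n. X n \<omega>)}"
    by (auto simp: path_event_def)
  also have "\<dots> \<in> {(\<lambda>\<omega> n. X n \<omega>) -` B \<inter> space M | B. B \<in> sets (PiM UNIV (\<lambda>_. count_space UNIV))}"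
    by (rule pred_in_vimage_family) (measurable, simp add: space_PiM)
  finally show ?thesis .
qed

end

section \<open>The walk after a strong stationary time\<close>

locale strong_stationary_time = tree_walk M V E r v0 X
  for M :: "'w measure" and V :: "'v set" and E r v0 and X :: "nat \<Rightarrow> 'w \<Rightarrow> 'v" +
  fixes N :: "'u measure" and U :: "'w \<Rightarrow> 'u" and \<eta> :: "'w \<Rightarrow> enat"
  assumes U_meas[measurable]: "U \<in> measurable M N"
    and U_indep: "indep_set
        {U -` A \<inter> space M | A. A \<in> sets N}
        {(\<lambda>\<omega> n. X n \<omega>) -` B \<inter> space M | B. B \<in> sets (PiM UNIV (\<lambda>_. count_space UNIV))}"
    and stopping: "\<And>n::nat. \<exists>S \<in> sets (PiM {..n} (\<lambda>_. count_space UNIV) \<Otimes>\<^sub>M N).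
        {\<omega> \<in> space M. \<eta> \<omega> = enat n}
        = {\<omega> \<in> space M. (restrict (\<lambda>i. X i \<omega>) {..n}, U \<omega>) \<in> S}"
    and strong_stationary: "\<And>y k. y \<in> V \<Longrightarrow>
        measure M {\<omega> \<in> space M. X k \<omega> = y \<and> \<eta> \<omega> = enat k}
        = stat_pi V E r y * measure M {\<omega> \<in> space M. \<eta> \<omega> = enat k}"
begin

definition stop_set :: "nat \<Rightarrow> ((nat \<Rightarrow> 'v) \<times> 'u) set" where
  "stop_set n = (SOME S. S \<in> sets (PiM {..n} (\<lambda>_. count_space UNIV) \<Otimes>\<^sub>M N) \<and>
     {\<omega> \<in> space M. \<eta> \<omega> = enat n} = {\<omega> \<in> space M. (restrict (\<lambda>i. X i \<omega>) {..n}, U \<omega>) \<in> S})"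

lemma stop_set:
  "stop_set n \<in> sets (PiM {..n} (\<lambda>_. count_space UNIV) \<Otimes>\<^sub>M N)"
  "{\<omega> \<in> space M. \<eta> \<omega> = enat n} = {\<omega> \<in> space M. (restrict (\<lambda>i. X i \<omega>) {..n}, U \<omega>) \<in> stop_set n}"
  using someI_ex[OF stopping[of n, unfolded Bex_def]] unfolding stop_set_def by blast+

definition stop_event :: "nat \<Rightarrow> 'v list \<Rightarrow> 'w set" where
  "stop_event n xs = {\<omega> \<in> space M. (restrict (\<lambda>i. xs ! i) {..n}, U \<omega>) \<in> stop_set n}"

text \<open>By independence of U and the walk, this is P(\<eta> = n | X 0 = xs ! 0, \<dots>, X n = xs ! n).\<close>

definition stop_weight :: "nat \<Rightarrow> 'v list \<Rightarrow> real" where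
  "stop_weight n xs = prob (stop_event n xs)"

lemma stop_event_in_U_family: "stop_event n xs \<in> {U -` A \<inter> space M | A. A \<in> sets N}"
proof -
  have "stop_event n xs = U -` (Pair (restrict (\<lambda>i. xs ! i) {..n}) -` stop_set n) \<inter> space M"
    by (auto simp: stop_event_def)
  then show ?thesis using sets_Pair1[OF stop_set(1)] by blast
qed

lemma stop_event_sets: "stop_event n xs \<in> events"
  by (rule subsetD[OF indep_setD_ev1[OF U_indep] stop_event_in_U_family])

lemma eta_measurable[measurable]: "\<eta> \<in> measurable M (count_space UNIV)"
proof -
  have eq_enat: "\<eta> -` {enat n} \<inter> space M \<in> events" for n
  proof -
    have meas: "(\<lambda>\<omega>. (restrict (\<lambda>i. X i \<omega>) {..n}, U \<omega>)) \<in> measurable M (PiM {..n} (\<lambda>_. count_space UNIV) \<Otimes>\<^sub>M N)"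
      by measurable
    have "\<eta> -` {enat n} \<inter> space M = (\<lambda>\<omega>. (restrict (\<lambda>i. X i \<omega>) {..n}, U \<omega>)) -` stop_set n \<inter> space M"
      using stop_set(2)[of n] by auto
    then show ?thesis
      using measurable_sets[OF meas stop_set(1)] by simp
  qed
  have "\<eta> -` {e} \<inter> space M \<in> events" for e
  proof (cases e)
    case infinity
    then have "\<eta> -` {e} \<inter> space M = space M - (\<Union>n. \<eta> -` {enat n} \<inter> space M)"
      by (auto simp: not_enat_eq)
    also have "\<dots> \<in> events"
      using eq_enat by (intro sets.Diff sets.top sets.countable_UN) auto
    finally show ?thesis .
  qed (simp add: eq_enat)
  then show ?thesis by (simp add: measurable_count_space_eq_countable)
qed

lemma stop_weight_indep:
  "prob (stop_event n xs \<inter> (path_event ys \<inter> {\<omega> \<in> space M. X j \<omega> = c}))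
    = stop_weight n xs * prob (path_event ys \<inter> {\<omega> \<in> space M. X j \<omega> = c})"
  unfolding stop_weight_def
  by (rule indep_setD[OF U_indep stop_event_in_U_family path_event_X_in_walk_family])

lemma X_and_stop_diff_escape:
  "{\<omega> \<in> space M. X j \<omega> = c \<and> \<eta> \<omega> = enat k} - (\<Union>i\<le>k. escape i)
    = (\<Union>xs\<in>paths k. stop_event k xs \<inter> (path_event xs \<inter> {\<omega> \<in> space M. X j \<omega> = c}))"
  (is "?D - ?Z = ?R")
proof (intro equalityI subsetI)
  fix \<omega> assume \<omega>: "\<omega> \<in> ?D - ?Z"
  then have "\<omega> \<in> space M" "\<forall>i\<le>k. X i \<omega> \<in> V"
    by (auto simp: escape_def)
  then obtain xs where xs: "xs \<in> paths k" "\<omega> \<in> path_event xs"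
    by (rule obtain_path)
  have "(restrict (\<lambda>i. X i \<omega>) {..k}, U \<omega>) \<in> stop_set k"
    using \<omega> stop_set(2)[of k] by auto
  then have "\<omega> \<in> stop_event k xs"
    using restrict_path_event[OF xs] \<open>\<omega> \<in> space M\<close> by (simp add: stop_event_def)
  then show "\<omega> \<in> ?R"
    using xs \<omega> by auto
next
  fix \<omega> assume "\<omega> \<in> ?R"
  then obtain xs where xs: "xs \<in> paths k" "\<omega> \<in> path_event xs" and "\<omega> \<in> stop_event k xs" "X j \<omega> = c"
    by auto
  then have "\<omega> \<in> space M" "(restrict (\<lambda>i. X i \<omega>) {..k}, U \<omega>) \<in> stop_set k"
    using restrict_path_event[OF xs] by (auto simp: stop_event_def)
  then have "\<eta> \<omega> = enat k"
    using stop_set(2)[of k] by blast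
  moreover have "X i \<omega> \<in> V" if "i \<le> k" for i
    using xs that nth_mem[of i xs] by (auto simp: paths_def path_event_def)
  ultimately show "\<omega> \<in> ?D - ?Z"
    using \<open>\<omega> \<in> space M\<close> \<open>X j \<omega> = c\<close> by (auto simp: escape_def)
qed

lemma prob_X_and_stop_eq_sum:
  "prob {\<omega> \<in> space M. X j \<omega> = c \<and> \<eta> \<omega> = enat k}
    = (\<Sum>xs\<in>paths k. stop_weight k xs * prob (path_event xs \<inter> {\<omega> \<in> space M. X j \<omega> = c}))"
proof -
  define B where "B xs = path_event xs \<inter> {\<omega> \<in> space M. X j \<omega> = c}" for xs
  have null: "(\<Union>i\<le>k. escape i) \<in> null_sets M"
    using escape_null by (intro null_sets_UN') auto
  have "prob {\<omega> \<in> space M. X j \<omega> = c \<and> \<eta> \<omega> = enat k}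
      = prob ({\<omega> \<in> space M. X j \<omega> = c \<and> \<eta> \<omega> = enat k} - (\<Union>i\<le>k. escape i))"
    by (rule measure_Diff_null_set[OF _ null, symmetric]) measurable
  also have "\<dots> = prob (\<Union>xs\<in>paths k. stop_event k xs \<inter> B xs)"
    unfolding X_and_stop_diff_escape B_def ..
  also have "\<dots> = (\<Sum>xs\<in>paths k. prob (stop_event k xs \<inter> B xs))"
  proof (rule finite_measure_finite_Union[OF finite_paths])
    show "(\<lambda>xs. stop_event k xs \<inter> B xs) ` paths k \<subseteq> events"
      using stop_event_sets by (auto simp: B_def)
    show "disjoint_family_on (\<lambda>xs. stop_event k xs \<inter> B xs) (paths k)"
      using disjoint_family_path_event[of k] by (auto simp: disjoint_family_on_def B_def)
  qed
  finally show ?thesis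
    unfolding B_def stop_weight_indep .
qed

lemma path_event_X_last:
  assumes "xs \<in> paths k"
  shows "path_event xs \<inter> {\<omega> \<in> space M. X k \<omega> = y} = (if last xs = y then path_event xs else {})"
proof -
  have "length xs = Suc k"
    using assms by (simp add: paths_def)
  then have "last xs = xs ! k"
    by (metis diff_Suc_1 last_conv_nth list.size(3) nat.distinct(1))
  then show ?thesis
    using assms by (auto simp: paths_def path_event_def)
qed

lemma sum_stop_weight_paths_ending_at:
  assumes "y \<in> V"
  shows "(\<Sum>xs\<in>{xs \<in> paths k. last xs = y}. stop_weight k xs * prob (path_event xs))
    = stat_pi V E r y * prob {\<omega> \<in> space M. \<eta> \<omega> = enat k}"
proof -
  have "(\<Sum>xs\<in>{xs \<in> paths k. last xs = y}. stop_weight k xs * prob (path_event xs))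
      = (\<Sum>xs\<in>paths k. stop_weight k xs * prob (path_event xs \<inter> {\<omega> \<in> space M. X k \<omega> = y}))"
    unfolding sum.inter_filter[OF finite_paths] by (rule sum.cong) (simp_all add: path_event_X_last)
  also have "\<dots> = prob {\<omega> \<in> space M. X k \<omega> = y \<and> \<eta> \<omega> = enat k}"
    by (rule prob_X_and_stop_eq_sum[symmetric])
  also have "\<dots> = stat_pi V E r y * prob {\<omega> \<in> space M. \<eta> \<omega> = enat k}"
    by (rule strong_stationary[OF assms])
  finally show ?thesis .
qed

lemma prob_X_and_stop_after:
  assumes "k \<le> s" and "v \<in> V"
  shows "prob {\<omega> \<in> space M. X s \<omega> = v \<and> \<eta> \<omega> = enat k}
    = stat_pi V E r v * prob {\<omega> \<in> space M. \<eta> \<omega> = enat k}"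
proof -
  let ?w = "\<lambda>xs. stop_weight k xs * prob (path_event xs)"
  let ?P = "srw_pow V E r (s - k)"
  have last_paths: "last ` paths k \<subseteq> V"
    using paths_last by blast
  have "prob {\<omega> \<in> space M. X s \<omega> = v \<and> \<eta> \<omega> = enat k} = (\<Sum>xs\<in>paths k. ?w xs * ?P (last xs) v)"
    unfolding prob_X_and_stop_eq_sum
  proof (rule sum.cong[OF refl])
    fix xs assume "xs \<in> paths k"
    then have "xs \<noteq> []" "length xs - 1 + (s - k) = s"
      using assms by (auto simp: paths_def)
    then show "stop_weight k xs * prob (path_event xs \<inter> {\<omega> \<in> space M. X s \<omega> = v}) = ?w xs * ?P (last xs) v"
      using markov_path_event[of xs "s - k" v] by simp
  qed
  also have "\<dots> = (\<Sum>y\<in>V. \<Sum>xs\<in>{xs \<in> paths k. last xs = y}. ?w xs * ?P (last xs) v)"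
    by (rule sum.group[symmetric, OF finite_paths finite_V last_paths])
  also have "\<dots> = (\<Sum>y\<in>V. (\<Sum>xs\<in>{xs \<in> paths k. last xs = y}. ?w xs) * ?P y v)"
    by (intro sum.cong refl) (auto simp: sum_distrib_right)
  also have "\<dots> = (\<Sum>y\<in>V. stat_pi V E r y * prob {\<omega> \<in> space M. \<eta> \<omega> = enat k} * ?P y v)"
    by (intro sum.cong refl) (simp add: sum_stop_weight_paths_ending_at)
  also have "\<dots> = (\<Sum>y\<in>V. stat_pi V E r y * ?P y v) * prob {\<omega> \<in> space M. \<eta> \<omega> = enat k}"
    by (subst sum_distrib_right) (simp add: mult_ac)
  also have "\<dots> = stat_pi V E r v * prob {\<omega> \<in> space M. \<eta> \<omega> = enat k}"
    by (simp add: srw_pow_stat_pi[OF tree root assms(2)])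
  finally show ?thesis .
qed

lemma prob_and_stop_before_eq_sum:
  assumes [measurable]: "Measurable.pred M P"
  shows "prob {\<omega> \<in> space M. P \<omega> \<and> \<eta> \<omega> < enat t} = (\<Sum>k<t. prob {\<omega> \<in> space M. P \<omega> \<and> \<eta> \<omega> = enat k})"
proof -
  have "e < enat t \<longleftrightarrow> (\<exists>k<t. e = enat k)" for e
    by (cases e) auto
  then have "{\<omega> \<in> space M. P \<omega> \<and> \<eta> \<omega> < enat t} = (\<Union>k\<in>{..<t}. {\<omega> \<in> space M. P \<omega> \<and> \<eta> \<omega> = enat k})"
    by auto
  also have "prob \<dots> = (\<Sum>k<t. prob {\<omega> \<in> space M. P \<omega> \<and> \<eta> \<omega> = enat k})"
    by (intro finite_measure_finite_Union) (auto simp: disjoint_family_on_def)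
  finally show ?thesis .
qed

lemma walk_stop_event_in_family:
  fixes P :: "(nat \<Rightarrow> 'v) \<Rightarrow> enat \<Rightarrow> bool"
  assumes "Measurable.pred (PiM UNIV (\<lambda>_. count_space UNIV) \<Otimes>\<^sub>M count_space UNIV) (\<lambda>(f, e). P f e)"
  shows "{\<omega> \<in> space M. P (\<lambda>n. X n \<omega>) (\<eta> \<omega>)}
    \<in> {(\<lambda>\<omega>. ((\<lambda>n. X n \<omega>), \<eta> \<omega>)) -` B \<inter> space M | B.
         B \<in> sets (PiM UNIV (\<lambda>_. count_space UNIV) \<Otimes>\<^sub>M count_space UNIV)}"
  using pred_in_vimage_family[OF assms, of M "\<lambda>\<omega>. ((\<lambda>n. X n \<omega>), \<eta> \<omega>)"]
  by (simp add: space_pair_measure space_PiM)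

lemma prob_X_and_stop_before:
  assumes "v \<in> V"
  shows "prob {\<omega> \<in> space M. X (t - 1) \<omega> = v \<and> \<eta> \<omega> < enat t}
    = stat_pi V E r v * prob {\<omega> \<in> space M. \<eta> \<omega> < enat t}"
proof -
  have "prob {\<omega> \<in> space M. X (t - 1) \<omega> = v \<and> \<eta> \<omega> < enat t}
      = (\<Sum>k<t. prob {\<omega> \<in> space M. X (t - 1) \<omega> = v \<and> \<eta> \<omega> = enat k})"
    by (rule prob_and_stop_before_eq_sum) measurable
  also have "\<dots> = (\<Sum>k<t. stat_pi V E r v * prob {\<omega> \<in> space M. \<eta> \<omega> = enat k})"
    using assms by (intro sum.cong refl prob_X_and_stop_after) auto
  also have "\<dots> = stat_pi V E r v * prob {\<omega> \<in> space M. \<eta> \<omega> < enat t}"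
    using prob_and_stop_before_eq_sum[of "\<lambda>_. True" t] by (simp add: sum_distrib_left)
  finally show ?thesis .
qed

end

theorem lemma2p10:
  fixes M :: "'w measure"
    and V :: "'v set" and E :: "'v \<Rightarrow> 'v \<Rightarrow> bool" and r v0 :: 'v
    and X :: "nat \<Rightarrow> 'w \<Rightarrow> 'v"
    and N :: "'u measure" and U :: "'w \<Rightarrow> 'u"
    and \<eta> :: "'w \<Rightarrow> enat" and \<tau> :: "'w \<Rightarrow> enat"
  assumes "prob_space M"
    and tree: "is_tree V E" and root: "r \<in> V" and start: "v0 \<in> V"
    and X_meas: "\<And>n. X n \<in> measurable M (count_space UNIV)"
    and X_law: "\<And>n xs. length xs = Suc n \<Longrightarrow>
        measure M {\<omega> \<in> space M. \<forall>i\<le>n. X i \<omega> = xs ! i}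
        = (if xs ! 0 = v0 then (\<Prod>i<n. srw V E r (xs ! i) (xs ! Suc i)) else 0)"
    and U_meas: "U \<in> measurable M N"
    and U_indep: "prob_space.indep_set M
        {U -` A \<inter> space M | A. A \<in> sets N}
        {(\<lambda>\<omega> n. X n \<omega>) -` B \<inter> space M | B. B \<in> sets (PiM UNIV (\<lambda>_. count_space UNIV))}"
    and stopping: "\<And>n::nat. \<exists>S \<in> sets (PiM {..n} (\<lambda>_. count_space UNIV) \<Otimes>\<^sub>M N).
        {\<omega> \<in> space M. \<eta> \<omega> = enat n}
        = {\<omega> \<in> space M. (restrict (\<lambda>i. X i \<omega>) {..n}, U \<omega>) \<in> S}"
    and strong_stationary: "\<And>y k. y \<in> V \<Longrightarrow>
        measure M {\<omega> \<in> space M. X k \<omega> = y \<and> \<eta> \<omega> = enat k}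
        = stat_pi V E r y * measure M {\<omega> \<in> space M. \<eta> \<omega> = enat k}"
    and optimal: "\<And>t::nat. measure M {\<omega> \<in> space M. \<eta> \<omega> > enat t}
        = Max ((\<lambda>y. 1 - srw_pow V E r t v0 y / stat_pi V E r y) ` V)"
    and tau_meas: "\<tau> \<in> measurable M (count_space UNIV)"
    and tau_indep: "prob_space.indep_set M
        {\<tau> -` A \<inter> space M | A. A \<in> sets (count_space UNIV)}
        {(\<lambda>\<omega>. ((\<lambda>n. X n \<omega>), \<eta> \<omega>)) -` B \<inter> space M | B.
           B \<in> sets (PiM UNIV (\<lambda>_. count_space UNIV) \<Otimes>\<^sub>M count_space UNIV)}"
    and tau_pos: "AE \<omega> in M. 0 < \<tau> \<omega>"
    and tau_fin: "AE \<omega> in M. \<tau> \<omega> < \<infinity>"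
    and pos: "measure M {\<omega> \<in> space M. \<eta> \<omega> < \<tau> \<omega>} > 0"
    and v: "v \<in> V"
  shows "measure M {\<omega> \<in> space M. X (the_enat (\<tau> \<omega>) - 1) \<omega> = v \<and> \<eta> \<omega> < \<tau> \<omega>}
         / measure M {\<omega> \<in> space M. \<eta> \<omega> < \<tau> \<omega>} = stat_pi V E r v"
proof -
  interpret strong_stationary_time M V E r v0 X N U \<eta>
    by (intro strong_stationary_time.intro tree_walk.intro tree_walk_axioms.intro
        strong_stationary_time_axioms.intro) (use assms in auto)
  note tau_meas[measurable]
  have [measurable]: "Measurable.pred M (\<lambda>\<omega>. \<eta> \<omega> < \<tau> \<omega>)"
    using measurable_compose_countable[where g = \<tau> and f = "\<lambda>e \<omega>. \<eta> \<omega> < e"] by measurable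
  have num: "(\<lambda>t. prob (\<tau> -` {enat t} \<inter> space M) * prob {\<omega> \<in> space M. X (t - 1) \<omega> = v \<and> \<eta> \<omega> < enat t})
      sums prob {\<omega> \<in> space M. X (the_enat (\<tau> \<omega>) - 1) \<omega> = v \<and> \<eta> \<omega> < \<tau> \<omega>}"
    using walk_stop_event_in_family[of "\<lambda>f e. f (t - 1) = v \<and> e < enat t" for t]
    by (intro prob_at_independent_time_sums[OF tau_fin tau_indep]) auto
  have den: "(\<lambda>t. prob (\<tau> -` {enat t} \<inter> space M) * prob {\<omega> \<in> space M. \<eta> \<omega> < enat t})
      sums prob {\<omega> \<in> space M. \<eta> \<omega> < \<tau> \<omega>}"
    using walk_stop_event_in_family[of "\<lambda>f e. e < enat t" for t]
    by (intro prob_at_independent_time_sums[OF tau_fin tau_indep]) auto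
  have "prob {\<omega> \<in> space M. X (the_enat (\<tau> \<omega>) - 1) \<omega> = v \<and> \<eta> \<omega> < \<tau> \<omega>}
      = stat_pi V E r v * prob {\<omega> \<in> space M. \<eta> \<omega> < \<tau> \<omega>}"
  proof (rule sums_unique2)
    show "(\<lambda>t. stat_pi V E r v * (prob (\<tau> -` {enat t} \<inter> space M) * prob {\<omega> \<in> space M. \<eta> \<omega> < enat t}))
        sums prob {\<omega> \<in> space M. X (the_enat (\<tau> \<omega>) - 1) \<omega> = v \<and> \<eta> \<omega> < \<tau> \<omega>}"
      using num unfolding prob_X_and_stop_before[OF v] by (simp only: mult.left_commute)
  qed (rule sums_mult[OF den])
  then show ?thesis
    using pos by simp
qed

end
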